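(* Let $G=(V,E,\ell,\Phi)$ be a strongly connected trackable weak model. Let $(X_t)_{t\ge0}$ be a Markov chain on $V$ with arbitrary initial distribution and transition matrix $P$ satisfying $P_{ij}>0$ if and only if $(i,j)\in E$. Then, almost surely, for every $s\ge 0$ there exists $N>s$ such that every walk $(y_0,y_1,\dots,y_N)$ in $G$ with $y_0=X_0$ and $\ell(y_i)=\ell(X_i)$ for all $0\le i\le N$ satisfies $y_{s+1}=X_{s+1}$. In words: when the starting node is known, whenever the chain passes through a node with same-colored out-neighbors, it eventually becomes possible to identify from the observed colors which branch was taken.
   Context: A (single-colored) weak model $G=(V,E,\ell,\Phi)$ consists of a finite set of nodes $V$, directed edges $E\subseteq V\times V$, a finite color set $\Phi$ and a coloring $\ell:V\to\Phi$. A walk is a node sequence with consecutive nodes joined by edges of $E$. For $Y_{[t]}\in\Phi^t$, $\mathcal H_G(Y_{[t]})$ is the set of walks $(x_1,\dots,x_t)$ with $\ell(x_i)=Y_i$ for all $i$, and $n_G(t)=\max_{Y_{[t]}}|\mathcal H_G(Y_{[t]})|$. $G$ is trackable if $n_G(t)=O(t^k)$ for some $k\ge0$, and strongly connected if every node is reachable from every node by a directed path. Two distinct nodes $v_1,v_2$ are same-colored out-neighbors of $v$ if $(v,v_1),(v,v_2)\in E$ and $\ell(v_1)=\ell(v_2)$. *)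

theory Defs
  imports "HOL-Probability.Probability" "HOL-Library.Landau_Symbols"
begin

definition weak_model :: "'v set \<Rightarrow> ('v \<times> 'v) set \<Rightarrow> ('v \<Rightarrow> 'c) \<Rightarrow> 'c set \<Rightarrow> bool" where
  "weak_model V E l Phi \<longleftrightarrow> finite V \<and> E \<subseteq> V \<times> V \<and> finite Phi \<and> l ` V \<subseteq> Phi"

definition is_walk :: "'v set \<Rightarrow> ('v \<times> 'v) set \<Rightarrow> 'v list \<Rightarrow> bool" where
  "is_walk V E xs \<longleftrightarrow> set xs \<subseteq> V \<and> (\<forall>i. Suc i < length xs \<longrightarrow> (xs ! i, xs ! Suc i) \<in> E)"

definition walks_of_colors :: "'v set \<Rightarrow> ('v \<times> 'v) set \<Rightarrow> ('v \<Rightarrow> 'c) \<Rightarrow> 'c list \<Rightarrow> 'v list set" where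
  "walks_of_colors V E l Y = {xs. is_walk V E xs \<and> length xs = length Y \<and> (\<forall>i < length Y. l (xs ! i) = Y ! i)}"

definition n_G :: "'v set \<Rightarrow> ('v \<times> 'v) set \<Rightarrow> ('v \<Rightarrow> 'c) \<Rightarrow> 'c set \<Rightarrow> nat \<Rightarrow> nat" where
  "n_G V E l Phi t = Max {card (walks_of_colors V E l Y) | Y. length Y = t \<and> set Y \<subseteq> Phi}"

definition trackable :: "'v set \<Rightarrow> ('v \<times> 'v) set \<Rightarrow> ('v \<Rightarrow> 'c) \<Rightarrow> 'c set \<Rightarrow> bool" where
  "trackable V E l Phi \<longleftrightarrow> (\<exists>k::nat. (\<lambda>t. real (n_G V E l Phi t)) \<in> O(\<lambda>t. real t ^ k))"

definition strongly_connected :: "'v set \<Rightarrow> ('v \<times> 'v) set \<Rightarrow> bool" where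
  "strongly_connected V E \<longleftrightarrow> (\<forall>u\<in>V. \<forall>v\<in>V. (u, v) \<in> E\<^sup>*)"

definition markov_chain :: "'w measure \<Rightarrow> 'v set \<Rightarrow> ('v \<Rightarrow> 'v \<Rightarrow> real) \<Rightarrow> (nat \<Rightarrow> 'w \<Rightarrow> 'v) \<Rightarrow> bool" where
  "markov_chain M V P X \<longleftrightarrow>
     prob_space M \<and>
     (\<forall>t. X t \<in> measurable M (count_space UNIV)) \<and>
     (\<forall>t. \<forall>\<omega>\<in>space M. X t \<omega> \<in> V) \<and>
     (\<forall>i\<in>V. \<forall>j\<in>V. P i j \<ge> 0) \<and>
     (\<forall>i\<in>V. (\<Sum>j\<in>V. P i j) = 1) \<and>
     (\<forall>t (xs :: nat \<Rightarrow> 'v).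
        measure M {\<omega> \<in> space M. \<forall>i \<le> Suc t. X i \<omega> = xs i}
          = measure M {\<omega> \<in> space M. \<forall>i \<le> t. X i \<omega> = xs i} * P (xs t) (xs (Suc t)))"

end

theory Submission
  imports Defs "HOL-Real_Asymp.Real_Asymp"
begin

text \<open>Trackability forbids two distinct walks with the same ends and the same colours: closing them
  into twin cycles would give \<open>2 ^ k\<close> walks of length \<open>O(k)\<close> with one colour word. Hence, for a
  fixed start, a walk is determined by its colours and its end, so at most \<open>|V|\<close> walks share a
  colour word.

  Let \<open>\<pi>\<close> be an observed history and call a walk confusable with \<open>\<pi>\<close> if it has the same start
  and colours but a different step \<open>s + 1\<close>. If every continuation from the last node of \<open>\<pi>\<close> could
  also be read from the end of some confusable walk, then every round along a cycle through \<open>\<pi>\<close>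
  would produce one more walk with a common colour word, exceeding \<open>|V|\<close>. So some continuation
  separates \<open>\<pi>\<close> from all confusable walks, and by finiteness its length is uniformly bounded by some
  \<open>L\<close>. Following it has probability at least \<open>\<delta>\<^sup>L\<close>, where \<open>\<delta>\<close> is the least transition
  probability of an edge, so the probability of still being confused decays geometrically every
  \<open>L\<close> steps.\<close>

lemma exponential_growth_not_polynomial:
  fixes f :: "nat \<Rightarrow> real"
  assumes "f \<in> O(\<lambda>t. real t ^ d)" and "L > 0"
  shows "\<exists>k. f (Suc (k * L)) < 2 ^ k"
proof (rule ccontr)
  assume "\<not> ?thesis"
  then have "(\<lambda>k. 2 ^ k :: real) \<in> O(\<lambda>k. f (Suc (k * L)))"
    by (intro bigoI[of _ 1] always_eventually) (auto simp: not_less intro: order.trans[OF _ abs_ge_self])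
  also have "filterlim (\<lambda>k. Suc (k * L)) at_top at_top"
    using \<open>L > 0\<close> by real_asymp
  then have "(\<lambda>k. f (Suc (k * L))) \<in> O(\<lambda>k. real (Suc (k * L)) ^ d)"
    by (rule landau_o.big.compose[OF assms(1)])
  also have "(\<lambda>k. real (Suc (k * L)) ^ d) \<in> O(\<lambda>k. real k ^ d)"
    using \<open>L > 0\<close> by real_asymp
  also have "(\<lambda>k. real k ^ d) \<in> o(\<lambda>k. 2 ^ k)"
    by real_asymp
  finally show False
    by (simp add: landau_o.small_refl_iff)
qed

lemma inj_on_concat_map_blocks:
  assumes "inj f" and "\<And>b. length (f b) = n"
  shows "inj_on (\<lambda>bs. concat (map f bs)) {bs. length bs = k}"
proof -
  have "bs = cs" if "length bs = length cs" "concat (map f bs) = concat (map f cs)" for bs cs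
    using that
  proof (induction bs arbitrary: cs)
    case (Cons b bs)
    then obtain c cs' where cs: "cs = c # cs'" by (cases cs) auto
    with Cons.prems have "f b = f c" "concat (map f bs) = concat (map f cs')"
      using assms(2) by (auto simp: append_eq_append_conv)
    with Cons cs \<open>inj f\<close> show ?case by (auto dest: injD)
  qed simp
  then show ?thesis by (auto intro: inj_onI)
qed

lemma last_append_tl: "ys \<noteq> [] \<Longrightarrow> xs \<noteq> [] \<Longrightarrow> last xs = hd ys \<Longrightarrow> last (xs @ tl ys) = last ys"
  by (cases ys) auto

lemma all_nat_split_Suc: "(\<forall>i::nat. P i) \<longleftrightarrow> P 0 \<and> (\<forall>i. P (Suc i))"
  by (metis not0_implies_Suc)

section \<open>Walks\<close>

locale digraph_walks =
  fixes V :: "'v set" and E :: "('v \<times> 'v) set"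
begin

fun walk :: "'v list \<Rightarrow> bool" where
  "walk [] \<longleftrightarrow> True"
| "walk [x] \<longleftrightarrow> x \<in> V"
| "walk (x # y # xs) \<longleftrightarrow> x \<in> V \<and> (x, y) \<in> E \<and> walk (y # xs)"

lemma is_walk_iff_walk: "is_walk V E xs \<longleftrightarrow> walk xs"
proof (induction xs rule: walk.induct)
  case (3 x y xs)
  have "is_walk V E (x # y # xs) \<longleftrightarrow> x \<in> V \<and> (x, y) \<in> E \<and> is_walk V E (y # xs)"
    unfolding is_walk_def
    by (subst all_nat_split_Suc) auto
  with 3 show ?case by simp
qed (simp_all add: is_walk_def)

lemma walk_Cons: "walk (x # xs) \<longleftrightarrow> x \<in> V \<and> (xs \<noteq> [] \<longrightarrow> (x, hd xs) \<in> E) \<and> walk xs"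
  by (cases xs) auto

lemma walk_append:
  "walk (xs @ ys) \<longleftrightarrow> walk xs \<and> walk ys \<and> (xs \<noteq> [] \<and> ys \<noteq> [] \<longrightarrow> (last xs, hd ys) \<in> E)"
  by (induction xs rule: walk.induct) (auto simp: walk_Cons)

lemma walk_append_tl:
  "walk xs \<Longrightarrow> walk ys \<Longrightarrow> xs \<noteq> [] \<Longrightarrow> last xs = hd ys \<Longrightarrow> walk (xs @ tl ys)"
  by (cases ys) (auto simp: walk_append walk_Cons)

lemma walk_take: "walk xs \<Longrightarrow> walk (take n xs)"
  by (metis append_take_drop_id walk_append)

lemma walk_drop: "walk xs \<Longrightarrow> walk (drop n xs)"
  by (metis append_take_drop_id walk_append)

lemma set_walk_subset: "walk xs \<Longrightarrow> set xs \<subseteq> V"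
  by (induction xs rule: walk.induct) auto

lemma walk_if_rtrancl:
  assumes "(u, v) \<in> E\<^sup>*" and "u \<in> V" and "E \<subseteq> V \<times> V"
  shows "\<exists>r. walk r \<and> r \<noteq> [] \<and> hd r = u \<and> last r = v"
  using assms(1)
proof (induction rule: rtrancl_induct)
  case base
  with \<open>u \<in> V\<close> show ?case by (intro exI[of _ "[u]"]) auto
next
  case (step y z)
  then obtain r where "walk r" "r \<noteq> []" "hd r = u" "last r = y" by blast
  with step.hyps(2) \<open>E \<subseteq> V \<times> V\<close> show ?case
    by (intro exI[of _ "r @ [z]"]) (auto simp: walk_append)
qed

end

section \<open>Trackable weak models\<close>

locale trackable_weak_model = digraph_walks V E for V :: "'v set" and E +
  fixes l :: "'v \<Rightarrow> 'c" and Phi :: "'c set"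
  assumes weak_model: "weak_model V E l Phi"
    and strongly_connected: "strongly_connected V E"
    and trackable: "trackable V E l Phi"
begin

lemma finite_V: "finite V" and edges_subset: "E \<subseteq> V \<times> V"
  and finite_Phi: "finite Phi" and colors_subset: "l ` V \<subseteq> Phi"
  using weak_model by (auto simp: weak_model_def)

lemma walk_between: "u \<in> V \<Longrightarrow> v \<in> V \<Longrightarrow> \<exists>r. walk r \<and> r \<noteq> [] \<and> hd r = u \<and> last r = v"
  using walk_if_rtrancl edges_subset strongly_connected by (auto simp: strongly_connected_def)

lemma walks_of_colors_eq: "walks_of_colors V E l Y = {xs. walk xs \<and> map l xs = Y}"
  by (auto simp: walks_of_colors_def is_walk_iff_walk list_eq_iff_nth_eq)

lemma finite_walks_with_colors: "finite {xs. walk xs \<and> map l xs = Y}"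
proof (rule finite_subset)
  show "{xs. walk xs \<and> map l xs = Y} \<subseteq> {xs. set xs \<subseteq> V \<and> length xs = length Y}"
    using set_walk_subset by auto
qed (rule finite_lists_length_eq[OF finite_V])

lemma card_walks_of_colors_le_n_G:
  assumes "set Y \<subseteq> Phi"
  shows "card (walks_of_colors V E l Y) \<le> n_G V E l Phi (length Y)"
proof -
  have "{card (walks_of_colors V E l Z) | Z. length Z = length Y \<and> set Z \<subseteq> Phi}
      = (\<lambda>Z. card (walks_of_colors V E l Z)) ` {Z. set Z \<subseteq> Phi \<and> length Z = length Y}"
    by auto
  then show ?thesis
    unfolding n_G_def using assms finite_lists_length_eq[OF finite_Phi] by (auto intro!: Max_ge)
qed

lemma exponentially_many_walks_from_twin_cycles:
  assumes cycles: "walk (a # A)" "walk (a # B)" "last (a # A) = a" "last (a # B) = a"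
    and twins: "A \<noteq> B" "map l A = map l B"
  shows "2 ^ k \<le> card {xs. walk xs \<and> map l xs = l a # concat (replicate k (map l A))}"
proof -
  define f where "f b = (if b then A else B)" for b
  define glue where "glue bs = a # concat (map f bs)" for bs
  have "walk (glue bs)" for bs
  proof (induction bs)
    case (Cons b bs)
    have "walk (a # f b)" "last (a # f b) = a"
      using cycles by (auto simp: f_def)
    from walk_append_tl[OF this(1) Cons[unfolded glue_def]] this(2) show ?case
      by (simp add: glue_def)
  qed (use cycles in \<open>simp add: glue_def walk_Cons\<close>)
  moreover have "map l (glue bs) = l a # concat (replicate (length bs) (map l A))" for bs
    by (induction bs) (auto simp: glue_def f_def twins)
  ultimately have glue_walks: "glue ` {bs. length bs = k}
      \<subseteq> {xs. walk xs \<and> map l xs = l a # concat (replicate k (map l A))}"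
    by auto
  have "inj_on glue {bs. length bs = k}"
  proof -
    have "inj f" "\<And>b. length (f b) = length A"
      using twins by (auto simp: f_def inj_def dest: map_eq_imp_length_eq)
    from inj_on_concat_map_blocks[OF this] show ?thesis
      by (auto simp: glue_def inj_on_def)
  qed
  then have "card (glue ` {bs. length bs = k}) = 2 ^ k"
    using card_lists_length_eq[of "UNIV :: bool set" k] by (simp add: card_image)
  with card_mono[OF finite_walks_with_colors glue_walks] show ?thesis
    by simp
qed

lemma no_twin_cycles:
  assumes cycles: "walk (a # A)" "walk (a # B)" "last (a # A) = a" "last (a # B) = a"
    and twins: "A \<noteq> B" "map l A = map l B"
  shows False
proof -
  have "A \<noteq> []" using twins by (auto dest: map_eq_imp_length_eq)
  have growth: "2 ^ k \<le> real (n_G V E l Phi (Suc (k * length A)))" for k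
  proof -
    have "2 ^ k \<le> card {xs. walk xs \<and> map l xs = l a # concat (replicate k (map l A))}"
      by (rule exponentially_many_walks_from_twin_cycles[OF cycles twins])
    also have "\<dots> \<le> n_G V E l Phi (Suc (k * length A))"
    proof -
      have "set (l a # concat (replicate k (map l A))) \<subseteq> Phi"
        using set_walk_subset[OF cycles(1)] colors_subset by auto
      from card_walks_of_colors_le_n_G[OF this] show ?thesis
        by (simp add: walks_of_colors_eq length_concat sum_list_replicate)
    qed
    finally show ?thesis by simp
  qed
  obtain d where "(\<lambda>t. real (n_G V E l Phi t)) \<in> O(\<lambda>t. real t ^ d)"
    using trackable by (auto simp: trackable_def)
  from exponential_growth_not_polynomial[OF this] \<open>A \<noteq> []\<close>
  obtain k where "real (n_G V E l Phi (Suc (k * length A))) < 2 ^ k"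
    by blast
  with growth[of k] show False
    by linarith
qed

lemma walk_eq_if_same_ends_and_colors:
  assumes walks: "walk ys" "walk zs" and "ys \<noteq> []"
    and ends: "hd ys = hd zs" "last ys = last zs" and colors: "map l ys = map l zs"
  shows "ys = zs"
proof (rule ccontr)
  assume "ys \<noteq> zs"
  have "zs \<noteq> []" using \<open>ys \<noteq> []\<close> colors by auto
  define a where "a = hd ys"
  have "a = hd zs" using ends(1) by (simp add: a_def)
  have "a \<in> V" "last ys \<in> V"
    using set_walk_subset[OF walks(1)] \<open>ys \<noteq> []\<close> by (auto simp: a_def)
  then obtain r where r: "walk r" "r \<noteq> []" "hd r = last ys" "last r = a"
    using walk_between by blast
  have closed: "walk (xs @ tl r)" "last (xs @ tl r) = a"
    if "walk xs" "xs \<noteq> []" "last xs = last ys" for xs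
    using walk_append_tl[OF that(1) r(1) that(2)] last_append_tl[OF r(2) that(2)] r(3,4) that(3)
    by simp_all
  define A where "A = tl ys @ tl r"
  define B where "B = tl zs @ tl r"
  have cycles: "a # A = ys @ tl r" "a # B = zs @ tl r"
    using \<open>ys \<noteq> []\<close> \<open>zs \<noteq> []\<close>
    by (simp add: A_def a_def, simp add: B_def \<open>a = hd zs\<close>)
  have "tl ys \<noteq> tl zs"
    using \<open>ys \<noteq> zs\<close> \<open>ys \<noteq> []\<close> \<open>zs \<noteq> []\<close> ends(1) by (metis list.collapse)
  then have "A \<noteq> B" "map l A = map l B"
    using colors by (simp_all add: A_def B_def map_tl)
  moreover have "walk (a # A)" "walk (a # B)" "last (a # A) = a" "last (a # B) = a"
    using closed[OF walks(1) \<open>ys \<noteq> []\<close>] closed[OF walks(2) \<open>zs \<noteq> []\<close>] ends(2)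
    by (simp_all add: cycles)
  ultimately show False
    using no_twin_cycles by blast
qed

definition walks_from :: "'v \<Rightarrow> 'c list \<Rightarrow> 'v list set" where
  "walks_from a \<sigma> = {ys. walk ys \<and> ys \<noteq> [] \<and> hd ys = a \<and> map l ys = \<sigma>}"

lemma finite_walks_from: "finite (walks_from a \<sigma>)"
  by (rule finite_subset[OF _ finite_walks_with_colors[of \<sigma>]]) (auto simp: walks_from_def)

lemma card_walks_from_le_card: "card (walks_from a \<sigma>) \<le> card V"
proof (rule card_inj_on_le[OF _ _ finite_V])
  show "inj_on last (walks_from a \<sigma>)"
    by (rule inj_onI) (auto simp: walks_from_def intro: walk_eq_if_same_ends_and_colors)
  show "last ` walks_from a \<sigma> \<subseteq> V"
    using set_walk_subset by (fastforce simp: walks_from_def)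
qed

section \<open>Separating continuations\<close>

definition confusable :: "nat \<Rightarrow> 'v list \<Rightarrow> 'v list \<Rightarrow> bool" where
  "confusable s \<pi> ys \<longleftrightarrow> walk ys \<and> map l ys = map l \<pi> \<and> hd ys = hd \<pi> \<and> ys ! Suc s \<noteq> \<pi> ! Suc s"

definition confusion_ends :: "nat \<Rightarrow> 'v list \<Rightarrow> 'v set" where
  "confusion_ends s \<pi> = last ` {ys. confusable s \<pi> ys}"

definition separating :: "'v set \<Rightarrow> 'v \<Rightarrow> 'v list \<Rightarrow> bool" where
  "separating D x \<rho> \<longleftrightarrow> walk \<rho> \<and> \<rho> \<noteq> [] \<and> hd \<rho> = x \<and>
     \<not> (\<exists>z. walk z \<and> z \<noteq> [] \<and> hd z \<in> D \<and> map l z = map l \<rho>)"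

lemma confusable_nonempty: "confusable s \<pi> ys \<Longrightarrow> ys \<noteq> []"
  by (auto simp: confusable_def)

lemma confusable_take: "confusable s \<pi> ys \<Longrightarrow> Suc s < k \<Longrightarrow> confusable s (take k \<pi>) (take k ys)"
  by (auto simp: confusable_def walk_take hd_take take_map[symmetric])

lemma confusion_ends_subset: "confusion_ends s \<pi> \<subseteq> V"
proof
  fix v assume "v \<in> confusion_ends s \<pi>"
  then obtain ys where "confusable s \<pi> ys" "v = last ys"
    by (auto simp: confusion_ends_def)
  with set_walk_subset[of ys] confusable_nonempty[of s \<pi> ys] show "v \<in> V"
    by (auto simp: confusable_def dest: last_in_set)
qed

lemma walks_from_prepend_cycle:
  assumes "walk c" "c \<noteq> []" "last c = a"
  shows "inj_on (\<lambda>u. c @ tl u) (walks_from a \<sigma>)"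
    and "(\<lambda>u. c @ tl u) ` walks_from a \<sigma> \<subseteq> walks_from (hd c) (map l c @ tl \<sigma>)"
proof -
  show "inj_on (\<lambda>u. c @ tl u) (walks_from a \<sigma>)"
    by (rule inj_onI) (auto simp: walks_from_def intro: list.expand)
  show "(\<lambda>u. c @ tl u) ` walks_from a \<sigma> \<subseteq> walks_from (hd c) (map l c @ tl \<sigma>)"
    using walk_append_tl[OF assms(1) _ assms(2)] assms by (auto simp: walks_from_def map_tl)
qed

lemma card_walks_from_increases_along_confusable_cycle:
  assumes \<pi>: "walk \<pi>" "Suc s < length \<pi>"
    and r: "walk r" "r \<noteq> []" "hd r = last \<pi>" "last r = hd \<pi>"
    and w: "walk w" "w \<noteq> []" "hd w = hd \<pi>"
    and z: "walk z" "z \<noteq> []" "hd z \<in> confusion_ends s \<pi>" "map l z = map l (r @ tl w)"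
  shows "card (walks_from (hd \<pi>) (map l w)) < card (walks_from (hd \<pi>) (map l (\<pi> @ tl r @ tl w)))"
    (is "card ?W < card ?W'")
proof -
  have "\<pi> \<noteq> []" using \<pi>(2) by auto
  have cycle: "walk (\<pi> @ tl r)" "\<pi> @ tl r \<noteq> []" "last (\<pi> @ tl r) = hd \<pi>"
    using walk_append_tl[OF \<pi>(1) r(1) \<open>\<pi> \<noteq> []\<close>] last_append_tl[OF r(2) \<open>\<pi> \<noteq> []\<close>] r(3,4) \<open>\<pi> \<noteq> []\<close>
    by simp_all
  have "?W' = walks_from (hd (\<pi> @ tl r)) (map l (\<pi> @ tl r) @ tl (map l w))"
    using \<open>\<pi> \<noteq> []\<close> by (simp add: map_tl)
  with walks_from_prepend_cycle[OF cycle]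
  have inj: "inj_on (\<lambda>u. \<pi> @ tl r @ tl u) ?W" and sub: "(\<lambda>u. \<pi> @ tl r @ tl u) ` ?W \<subseteq> ?W'"
    by simp_all
  obtain t where t: "confusable s \<pi> t" "last t = hd z"
    using z(3) by (auto simp: confusion_ends_def)
  have "t \<noteq> []" "length t = length \<pi>"
    using t(1) \<open>\<pi> \<noteq> []\<close> by (auto simp: confusable_def dest: map_eq_imp_length_eq)
  define e where "e = t @ tl z"
  have "e \<in> ?W'"
    using walk_append_tl[OF _ z(1) \<open>t \<noteq> []\<close> t(2)] t(1) z(4) r(2) \<open>t \<noteq> []\<close>
    by (auto simp: walks_from_def e_def confusable_def map_tl)
  moreover have "e \<notin> (\<lambda>u. \<pi> @ tl r @ tl u) ` ?W"
  proof
    assume "e \<in> (\<lambda>u. \<pi> @ tl r @ tl u) ` ?W"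
    then have "take (length \<pi>) e = \<pi>"
      by auto
    moreover have "take (length \<pi>) e = t"
      using \<open>length t = length \<pi>\<close> by (simp add: e_def)
    ultimately show False
      using t(1) by (simp add: confusable_def)
  qed
  ultimately have "Suc (card ?W) \<le> card ?W'"
    using card_mono[OF finite_walks_from, of "insert e ((\<lambda>u. \<pi> @ tl r @ tl u) ` ?W)"] sub inj
      finite_walks_from[of "hd \<pi>" "map l w"]
    by (simp add: card_image)
  then show ?thesis by simp
qed

lemma separating_walk_exists:
  assumes \<pi>: "walk \<pi>" "Suc s < length \<pi>"
  shows "\<exists>\<rho>. separating (confusion_ends s \<pi>) (last \<pi>) \<rho>"
proof (rule ccontr)
  assume none: "\<nexists>\<rho>. separating (confusion_ends s \<pi>) (last \<pi>) \<rho>"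
  have "\<pi> \<noteq> []" using \<pi>(2) by auto
  then have "hd \<pi> \<in> V" "last \<pi> \<in> V"
    using set_walk_subset[OF \<pi>(1)] by auto
  then obtain r where r: "walk r" "r \<noteq> []" "hd r = last \<pi>" "last r = hd \<pi>"
    using walk_between by blast
  have cycle: "walk (\<pi> @ tl r)" "last (\<pi> @ tl r) = hd \<pi>"
    using walk_append_tl[OF \<pi>(1) r(1) \<open>\<pi> \<noteq> []\<close>] last_append_tl[OF r(2) \<open>\<pi> \<noteq> []\<close>] r(3,4)
    by simp_all
  have more: "card (walks_from (hd \<pi>) (map l w)) < card (walks_from (hd \<pi>) (map l (\<pi> @ tl r @ tl w)))"
    if w: "walk w" "w \<noteq> []" "hd w = hd \<pi>" for w
  proof -
    have "walk (r @ tl w)" "r @ tl w \<noteq> []" "hd (r @ tl w) = last \<pi>"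
      using walk_append_tl[OF r(1) w(1) r(2)] r w(3) by simp_all
    with none obtain z where "walk z" "z \<noteq> []" "hd z \<in> confusion_ends s \<pi>" "map l z = map l (r @ tl w)"
      by (auto simp: separating_def)
    from card_walks_from_increases_along_confusable_cycle[OF \<pi> r w this] show ?thesis .
  qed
  have "\<exists>w. walk w \<and> w \<noteq> [] \<and> hd w = hd \<pi> \<and> k \<le> card (walks_from (hd \<pi>) (map l w))" for k
  proof (induction k)
    case 0
    show ?case using \<open>hd \<pi> \<in> V\<close> by (intro exI[of _ "[hd \<pi>]"]) auto
  next
    case (Suc k)
    then obtain w where w: "walk w" "w \<noteq> []" "hd w = hd \<pi>"
      and k: "k \<le> card (walks_from (hd \<pi>) (map l w))"
      by blast
    have "walk (\<pi> @ tl r @ tl w)"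
      using walk_append_tl[OF cycle(1) w(1)] \<open>\<pi> \<noteq> []\<close> cycle(2) w(3) by simp
    with more[OF w] k \<open>\<pi> \<noteq> []\<close> show ?case
      by (intro exI[of _ "\<pi> @ tl r @ tl w"]) auto
  qed
  then obtain w where "Suc (card V) \<le> card (walks_from (hd \<pi>) (map l w))"
    by blast
  with card_walks_from_le_card show False
    by (metis not_less_eq_eq)
qed

lemma not_confusable_beyond_separating:
  assumes sep: "separating (confusion_ends s \<pi>) (last \<pi>) \<rho>" and "Suc s < length \<pi>"
  shows "\<not> confusable s (\<pi> @ tl \<rho> @ \<tau>) ys"
proof
  assume c: "confusable s (\<pi> @ tl \<rho> @ \<tau>) ys"
  define n where "n = length \<pi>"
  have "\<pi> \<noteq> []" "\<rho> \<noteq> []" "hd \<rho> = last \<pi>"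
    using assms by (auto simp: separating_def)
  have ys: "walk ys" "map l ys = map l \<pi> @ map l (tl \<rho>) @ map l \<tau>"
    using c by (simp_all add: confusable_def)
  have "n - 1 < length ys"
    using ys(2)[THEN arg_cong[of _ _ length]] \<open>\<pi> \<noteq> []\<close> by (simp add: n_def less_diff_conv2 Suc_leI)
  define v where "v = ys ! (n - 1)"
  have "v \<in> confusion_ends s \<pi>"
  proof -
    have "confusable s \<pi> (take n ys)"
      using confusable_take[OF c, of n] \<open>Suc s < length \<pi>\<close> by (simp add: n_def)
    moreover have "last (take n ys) = v"
      using \<open>n - 1 < length ys\<close> \<open>\<pi> \<noteq> []\<close> by (subst last_conv_nth) (auto simp: n_def v_def)
    ultimately show ?thesis
      by (auto simp: confusion_ends_def)
  qed
  define z where "z = take (length \<rho>) (drop (n - 1) ys)"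
  have "walk z" "z \<noteq> []" "hd z = v"
    using ys(1) \<open>\<rho> \<noteq> []\<close> \<open>n - 1 < length ys\<close>
    by (auto simp: z_def v_def walk_take walk_drop hd_take hd_drop_conv_nth)
  moreover have "map l z = map l \<rho>"
  proof -
    have "drop (n - 1) (map l \<pi>) = [l (hd \<rho>)]"
      using \<open>\<pi> \<noteq> []\<close> \<open>hd \<rho> = last \<pi>\<close> by (cases \<pi> rule: rev_cases) (simp_all add: n_def)
    then show ?thesis
      using \<open>\<rho> \<noteq> []\<close> \<open>\<pi> \<noteq> []\<close>
      by (cases \<rho>) (simp_all add: z_def take_map[symmetric] drop_map[symmetric] ys(2) n_def)
  qed
  ultimately show False
    using sep \<open>v \<in> confusion_ends s \<pi>\<close> unfolding separating_def by metis
qed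

text \<open>For pairs without a separating walk the \<open>LEAST\<close> is a junk value; it only enlarges the bound.\<close>

definition separation_bound :: nat where
  "separation_bound = Max ((\<lambda>(x, D). LEAST m. \<exists>\<rho>. separating D x \<rho> \<and> length \<rho> = Suc m) ` (V \<times> Pow V))"

lemma short_separating_walk_exists:
  assumes "walk \<pi>" "Suc s < length \<pi>"
  shows "\<exists>\<rho>. separating (confusion_ends s \<pi>) (last \<pi>) \<rho> \<and> length \<rho> \<le> Suc separation_bound"
proof -
  define D where "D = confusion_ends s \<pi>"
  define x where "x = last \<pi>"
  obtain \<rho> where "separating D x \<rho>"
    using separating_walk_exists[OF assms] by (auto simp: D_def x_def)
  then have "\<exists>m \<rho>. separating D x \<rho> \<and> length \<rho> = Suc m"
    by (auto simp: separating_def intro!: exI[of _ "length \<rho> - 1"])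
  from LeastI_ex[OF this] obtain \<rho>' where
    \<rho>': "separating D x \<rho>'" "length \<rho>' = Suc (LEAST m. \<exists>\<rho>. separating D x \<rho> \<and> length \<rho> = Suc m)"
    by blast
  have "(x, D) \<in> V \<times> Pow V"
  proof -
    have "\<pi> \<noteq> []" using assms(2) by auto
    with set_walk_subset[OF assms(1)] confusion_ends_subset show ?thesis
      by (auto simp: D_def x_def)
  qed
  then have "(LEAST m. \<exists>\<rho>. separating D x \<rho> \<and> length \<rho> = Suc m) \<le> separation_bound"
    unfolding separation_bound_def using finite_V by (intro Max_ge) force+
  with \<rho>' show ?thesis
    by (auto simp: D_def x_def)
qed

end

section \<open>The Markov chain\<close>

locale trackable_markov_chain = trackable_weak_model V E l Phi for V :: "'v set" and E l Phi +
  fixes M :: "'w measure" and P :: "'v \<Rightarrow> 'v \<Rightarrow> real" and X :: "nat \<Rightarrow> 'w \<Rightarrow> 'v"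
  assumes markov_chain: "markov_chain M V P X"
    and positive_iff_edge: "\<forall>i\<in>V. \<forall>j\<in>V. P i j > 0 \<longleftrightarrow> (i, j) \<in> E"
begin

sublocale prob_space M
  using markov_chain by (simp add: markov_chain_def)

lemma X_measurable [measurable]: "X t \<in> M \<rightarrow>\<^sub>M count_space UNIV"
  and X_in_V: "\<omega> \<in> space M \<Longrightarrow> X t \<omega> \<in> V"
  and markov_property: "measure M {\<omega> \<in> space M. \<forall>i \<le> Suc t. X i \<omega> = xs i}
    = measure M {\<omega> \<in> space M. \<forall>i \<le> t. X i \<omega> = xs i} * P (xs t) (xs (Suc t))"
  using markov_chain by (auto simp: markov_chain_def)

definition trajectory :: "'w \<Rightarrow> nat \<Rightarrow> 'v list" where
  "trajectory \<omega> n = map (\<lambda>i. X i \<omega>) [0..<n]"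

definition cylinder :: "'v list \<Rightarrow> 'w set" where
  "cylinder h = {\<omega> \<in> space M. trajectory \<omega> (length h) = h}"

lemma set_trajectory_subset: "\<omega> \<in> space M \<Longrightarrow> set (trajectory \<omega> n) \<subseteq> V"
  by (auto simp: trajectory_def X_in_V)

lemma take_trajectory: "k \<le> n \<Longrightarrow> take k (trajectory \<omega> n) = trajectory \<omega> k"
  by (simp add: trajectory_def take_map)

lemma trajectory_eq_iff: "trajectory \<omega> n = h \<longleftrightarrow> length h = n \<and> (\<forall>i<n. X i \<omega> = h ! i)"
  by (auto simp: trajectory_def list_eq_iff_nth_eq)

lemma cylinder_eq: "cylinder h = {\<omega> \<in> space M. \<forall>i<length h. X i \<omega> = h ! i}"
  by (simp add: cylinder_def trajectory_eq_iff)

lemma sets_cylinder [measurable]: "cylinder h \<in> sets M"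
  unfolding cylinder_eq by measurable

lemma measure_cylinder_snoc:
  assumes "h \<noteq> []"
  shows "measure M (cylinder (h @ [v])) = measure M (cylinder h) * P (last h) v"
proof -
  define t where "t = length h - 1"
  have "length h = Suc t" using assms by (simp add: t_def)
  then have "cylinder (h @ [v]) = {\<omega> \<in> space M. \<forall>i \<le> Suc t. X i \<omega> = (h @ [v]) ! i}"
    "cylinder h = {\<omega> \<in> space M. \<forall>i \<le> t. X i \<omega> = (h @ [v]) ! i}"
    by (auto simp: cylinder_eq nth_append less_Suc_eq_le)
  moreover have "(h @ [v]) ! t = last h" "(h @ [v]) ! Suc t = v"
    using \<open>length h = Suc t\<close> assms by (simp_all add: nth_append last_conv_nth)
  ultimately show ?thesis
    using markov_property[of t "\<lambda>i. (h @ [v]) ! i"] by simp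
qed

lemma walk_if_measure_cylinder_pos: "measure M (cylinder h) > 0 \<Longrightarrow> walk h"
proof (induction h rule: rev_induct)
  case (snoc v h)
  then obtain \<omega> where "\<omega> \<in> cylinder (h @ [v])"
    by (metis measure_empty less_irrefl ex_in_conv)
  then have "set (h @ [v]) \<subseteq> V"
    using set_trajectory_subset by (metis (mono_tags, lifting) cylinder_def mem_Collect_eq)
  show ?case
  proof (cases "h = []")
    case False
    have "measure M (cylinder h) * P (last h) v > 0"
      using snoc.prems measure_cylinder_snoc[OF False] by simp
    then have "measure M (cylinder h) > 0" "P (last h) v > 0"
      using measure_nonneg[of M "cylinder h"] by (auto simp: zero_less_mult_iff)
    moreover have "last h \<in> V" "v \<in> V"
      using \<open>set (h @ [v]) \<subseteq> V\<close> False by auto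
    ultimately show ?thesis
      using snoc.IH \<open>set (h @ [v]) \<subseteq> V\<close> False positive_iff_edge by (auto simp: walk_append)
  qed (use \<open>set (h @ [v]) \<subseteq> V\<close> in simp)
qed simp

text \<open>The element \<open>1\<close> keeps the minimum well defined for \<open>E = {}\<close> and at most \<open>1\<close>.\<close>

definition min_edge_prob :: real where
  "min_edge_prob = Min (insert 1 ((\<lambda>(i, j). P i j) ` E))"

lemma finite_E: "finite E"
  using finite_subset[OF edges_subset] finite_V by simp

lemma min_edge_prob_le: "(i, j) \<in> E \<Longrightarrow> min_edge_prob \<le> P i j"
  using finite_E by (auto simp: min_edge_prob_def intro: Min_le)

lemma min_edge_prob_le_one: "min_edge_prob \<le> 1"
  using finite_E by (simp add: min_edge_prob_def)

lemma min_edge_prob_pos: "min_edge_prob > 0"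
  using finite_E edges_subset positive_iff_edge by (fastforce simp: min_edge_prob_def)

lemma measure_cylinder_append_walk:
  assumes "walk \<rho>" "\<rho> \<noteq> []" "h \<noteq> []" "hd \<rho> = last h"
  shows "min_edge_prob ^ (length \<rho> - 1) * measure M (cylinder h) \<le> measure M (cylinder (h @ tl \<rho>))"
  using assms
proof (induction \<rho> rule: rev_induct)
  case (snoc v \<rho>)
  show ?case
  proof (cases "\<rho> = []")
    case False
    have "walk \<rho>" "(last \<rho>, v) \<in> E" and hd: "hd \<rho> = last h"
      using snoc.prems False by (auto simp: walk_append)
    have last: "last (h @ tl \<rho>) = last \<rho>"
      using last_append_tl[OF False \<open>h \<noteq> []\<close>] hd by simp
    have "min_edge_prob ^ (length (\<rho> @ [v]) - 1) * measure M (cylinder h)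
        = (min_edge_prob ^ (length \<rho> - 1) * measure M (cylinder h)) * min_edge_prob"
      using False by (cases \<rho>) (simp_all add: algebra_simps)
    also have "\<dots> \<le> measure M (cylinder (h @ tl \<rho>)) * P (last \<rho>) v"
      using snoc.IH[OF \<open>walk \<rho>\<close> False \<open>h \<noteq> []\<close> hd] min_edge_prob_le[OF \<open>(last \<rho>, v) \<in> E\<close>]
        min_edge_prob_pos
      by (intro mult_mono) simp_all
    also have "\<dots> = measure M (cylinder (h @ tl (\<rho> @ [v])))"
      using measure_cylinder_snoc[of "h @ tl \<rho>" v] \<open>h \<noteq> []\<close> False last by simp
    finally show ?thesis .
  qed simp
qed simp

lemma trajectory_in_cylinder:
  assumes "\<omega> \<in> cylinder h" "length h \<le> n"
  shows "trajectory \<omega> n = h @ drop (length h) (trajectory \<omega> n)"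
proof -
  have "take (length h) (trajectory \<omega> n) = h"
    using assms by (simp add: cylinder_def take_trajectory)
  then show ?thesis
    by (metis append_take_drop_id)
qed

lemma cylinder_append_subset: "cylinder (h @ g) \<subseteq> cylinder h"
proof
  fix \<omega> assume \<omega>: "\<omega> \<in> cylinder (h @ g)"
  have "trajectory \<omega> (length h) = take (length h) (trajectory \<omega> (length (h @ g)))"
    by (simp add: take_trajectory)
  also have "\<dots> = h"
    using \<omega> by (simp add: cylinder_def)
  finally show "\<omega> \<in> cylinder h"
    using \<omega> by (simp add: cylinder_def)
qed

lemma measure_eq_sum_cylinders:
  assumes "B \<in> sets M" "finite A" "\<forall>h\<in>A. length h = n" "B \<subseteq> {\<omega> \<in> space M. trajectory \<omega> n \<in> A}"
  shows "measure M B = (\<Sum>h\<in>A. measure M (cylinder h \<inter> B))"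
proof -
  have B: "B = (\<Union>h\<in>A. cylinder h \<inter> B)"
    using assms(3,4) by (auto simp: cylinder_def)
  have disjoint: "disjoint_family_on (\<lambda>h. cylinder h \<inter> B) A"
    using assms(3) by (auto simp: disjoint_family_on_def cylinder_def)
  from B have "measure M B = measure M (\<Union>h\<in>A. cylinder h \<inter> B)"
    by (rule arg_cong)
  also have "\<dots> = (\<Sum>h\<in>A. measure M (cylinder h \<inter> B))"
    using assms(1-3) disjoint by (intro finite_measure_finite_Union) auto
  finally show ?thesis .
qed

definition confused :: "nat \<Rightarrow> nat \<Rightarrow> 'w set" where
  "confused s n = {\<omega> \<in> space M. \<exists>ys. confusable s (trajectory \<omega> n) ys}"

definition confusing_histories :: "nat \<Rightarrow> nat \<Rightarrow> 'v list set" where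
  "confusing_histories s n = {h. set h \<subseteq> V \<and> length h = n \<and> (\<exists>ys. confusable s h ys)}"

lemma finite_confusing_histories: "finite (confusing_histories s n)"
  by (rule finite_subset[OF _ finite_lists_length_eq[OF finite_V, of n]])
    (auto simp: confusing_histories_def)

lemma confused_eq: "confused s n = {\<omega> \<in> space M. trajectory \<omega> n \<in> confusing_histories s n}"
  using set_trajectory_subset by (auto simp: confused_def confusing_histories_def trajectory_def)

lemma sets_confused [measurable]: "confused s n \<in> sets M"
proof -
  have "confused s n = (\<Union>h\<in>confusing_histories s n. cylinder h)"
    by (auto simp: confused_eq cylinder_def confusing_histories_def)
  then show ?thesis
    using finite_confusing_histories by auto
qed

lemma cylinder_separated_inter_confused:
  assumes "separating (confusion_ends s h) (last h) \<rho>" "Suc s < length h" "length (h @ tl \<rho>) \<le> m"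
  shows "cylinder (h @ tl \<rho>) \<inter> confused s m = {}"
proof -
  have "\<not> confusable s (trajectory \<omega> m) ys" if "\<omega> \<in> cylinder (h @ tl \<rho>)" for \<omega> ys
  proof -
    from trajectory_in_cylinder[OF that assms(3)]
    have "trajectory \<omega> m = h @ tl \<rho> @ drop (length (h @ tl \<rho>)) (trajectory \<omega> m)"
      by simp
    with not_confusable_beyond_separating[OF assms(1,2)] show ?thesis
      by metis
  qed
  then show ?thesis
    by (auto simp: confused_def)
qed

lemma measure_cylinder_inter_confused_le:
  assumes "length h = n" "Suc s < n"
  defines "L \<equiv> separation_bound"
  shows "measure M (cylinder h \<inter> confused s (n + L)) \<le> (1 - min_edge_prob ^ L) * measure M (cylinder h)"
proof (cases "measure M (cylinder h) = 0")
  case True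
  then show ?thesis
    using finite_measure_mono[of "cylinder h \<inter> confused s (n + L)" "cylinder h"] by simp
next
  case False
  then have "measure M (cylinder h) > 0"
    using measure_nonneg[of M "cylinder h"] by linarith
  then have "walk h"
    by (rule walk_if_measure_cylinder_pos)
  have "h \<noteq> []" using assms by auto
  obtain \<rho> where sep: "separating (confusion_ends s h) (last h) \<rho>" and "length \<rho> \<le> Suc L"
    using short_separating_walk_exists[OF \<open>walk h\<close>] assms by (auto simp: L_def)
  define h' where "h' = h @ tl \<rho>"
  have "cylinder h' \<inter> confused s (n + L) = {}"
    using cylinder_separated_inter_confused[OF sep] assms \<open>length \<rho> \<le> Suc L\<close> by (simp add: h'_def)
  then have "measure M (cylinder h \<inter> confused s (n + L)) \<le> measure M (cylinder h - cylinder h')"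
    by (intro finite_measure_mono) auto
  also have "\<dots> = measure M (cylinder h) - measure M (cylinder h')"
    using cylinder_append_subset by (simp add: finite_measure_Diff h'_def)
  also have "\<dots> \<le> measure M (cylinder h) - min_edge_prob ^ L * measure M (cylinder h)"
  proof -
    have "min_edge_prob ^ L \<le> min_edge_prob ^ (length \<rho> - 1)"
      using \<open>length \<rho> \<le> Suc L\<close> min_edge_prob_pos min_edge_prob_le_one by (intro power_decreasing) auto
    then have "min_edge_prob ^ L * measure M (cylinder h)
        \<le> min_edge_prob ^ (length \<rho> - 1) * measure M (cylinder h)"
      by (rule mult_right_mono) simp
    also have "\<dots> \<le> measure M (cylinder h')"
      using measure_cylinder_append_walk sep \<open>h \<noteq> []\<close> by (auto simp: separating_def h'_def)
    finally show ?thesis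
      by simp
  qed
  finally show ?thesis
    by (simp add: algebra_simps)
qed

lemma confused_antimono:
  assumes "Suc s < n" "n \<le> m"
  shows "confused s m \<subseteq> confused s n"
proof
  fix \<omega> assume "\<omega> \<in> confused s m"
  then obtain ys where "\<omega> \<in> space M" "confusable s (trajectory \<omega> m) ys"
    by (auto simp: confused_def)
  with confusable_take[OF this(2) assms(1)] show "\<omega> \<in> confused s n"
    by (auto simp: confused_def take_trajectory[OF assms(2)])
qed

lemma measure_confused_contracts:
  assumes "Suc s < n"
  defines "L \<equiv> separation_bound"
  shows "measure M (confused s (n + L)) \<le> (1 - min_edge_prob ^ L) * measure M (confused s n)"
proof -
  define A where "A = confusing_histories s n"
  have A: "finite A" "\<forall>h\<in>A. length h = n"
    using finite_confusing_histories by (auto simp: A_def confusing_histories_def)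
  have confused_subset: "confused s n \<subseteq> {\<omega> \<in> space M. trajectory \<omega> n \<in> A}"
    by (simp add: A_def confused_eq)
  have "measure M (confused s (n + L)) = (\<Sum>h\<in>A. measure M (cylinder h \<inter> confused s (n + L)))"
    using confused_antimono[OF assms(1), of "n + L"] confused_subset
    by (intro measure_eq_sum_cylinders[OF sets_confused A]) simp
  also have "\<dots> \<le> (\<Sum>h\<in>A. (1 - min_edge_prob ^ L) * measure M (cylinder h \<inter> confused s n))"
  proof (rule sum_mono)
    fix h assume "h \<in> A"
    then have "cylinder h \<subseteq> confused s n"
      using A(2) by (auto simp: A_def confused_eq cylinder_def)
    with measure_cylinder_inter_confused_le[of h n s] \<open>h \<in> A\<close> A(2) assms show
      "measure M (cylinder h \<inter> confused s (n + L)) \<le> (1 - min_edge_prob ^ L) * measure M (cylinder h \<inter> confused s n)"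
      by (simp add: Int_absorb2)
  qed
  also have "\<dots> = (1 - min_edge_prob ^ L) * measure M (confused s n)"
  proof -
    have "measure M (confused s n) = (\<Sum>h\<in>A. measure M (cylinder h \<inter> confused s n))"
      using measure_eq_sum_cylinders[OF sets_confused A confused_subset] .
    then show ?thesis
      by (simp add: sum_distrib_left)
  qed
  finally show ?thesis .
qed

lemma measure_confused_geometric:
  defines "q \<equiv> 1 - min_edge_prob ^ separation_bound"
  shows "measure M (confused s (Suc (Suc s) + k * separation_bound)) \<le> q ^ k"
proof (induction k)
  case (Suc k)
  have "0 \<le> q"
    using min_edge_prob_pos min_edge_prob_le_one by (simp add: q_def power_le_one)
  have "measure M (confused s (Suc (Suc s) + Suc k * separation_bound))
      = measure M (confused s ((Suc (Suc s) + k * separation_bound) + separation_bound))"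
    by (simp add: algebra_simps)
  also have "\<dots> \<le> q * measure M (confused s (Suc (Suc s) + k * separation_bound))"
    unfolding q_def by (rule measure_confused_contracts) simp
  also have "\<dots> \<le> q * q ^ k"
    using Suc.IH \<open>0 \<le> q\<close> by (rule mult_left_mono)
  finally show ?case
    by simp
qed simp

lemma AE_eventually_not_confused: "AE \<omega> in M. \<exists>N > s. \<nexists>ys. confusable s (trajectory \<omega> (Suc N)) ys"
proof -
  define L where "L = separation_bound"
  define q where "q = 1 - min_edge_prob ^ L"
  define Z where "Z = (\<Inter>k. confused s (Suc (Suc s) + k * L))"
  have "Z \<in> sets M"
    by (simp add: Z_def)
  have "(\<lambda>k. q ^ k) \<longlonglongrightarrow> 0"
    using min_edge_prob_pos min_edge_prob_le_one by (intro LIMSEQ_power_zero) (auto simp: q_def power_le_one)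
  moreover have "measure M Z \<le> q ^ k" for k
  proof -
    have "Z \<subseteq> confused s (Suc (Suc s) + k * L)"
      unfolding Z_def by (rule INT_lower) simp
    then have "measure M Z \<le> measure M (confused s (Suc (Suc s) + k * L))"
      by (rule finite_measure_mono) simp
    with measure_confused_geometric[of s k] show ?thesis
      by (simp add: q_def L_def)
  qed
  ultimately have "measure M Z \<le> 0"
    by (intro LIMSEQ_le_const) auto
  with \<open>Z \<in> sets M\<close> have "Z \<in> null_sets M"
    by (simp add: null_sets_def emeasure_eq_measure measure_nonneg antisym)
  then show ?thesis
  proof (rule AE_I')
    show "{\<omega> \<in> space M. \<not> (\<exists>N > s. \<nexists>ys. confusable s (trajectory \<omega> (Suc N)) ys)} \<subseteq> Z"
    proof
      fix \<omega> assume "\<omega> \<in> {\<omega> \<in> space M. \<not> (\<exists>N > s. \<nexists>ys. confusable s (trajectory \<omega> (Suc N)) ys)}"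
      then have "\<omega> \<in> space M" and confused: "\<And>N. s < N \<Longrightarrow> \<exists>ys. confusable s (trajectory \<omega> (Suc N)) ys"
        by auto
      have "\<omega> \<in> confused s (Suc (Suc s) + k * L)" for k
        using \<open>\<omega> \<in> space M\<close> confused[of "Suc s + k * L"] by (simp add: confused_def)
      then show "\<omega> \<in> Z"
        by (simp add: Z_def)
    qed
  qed
qed

lemma confusable_trajectory_iff:
  assumes "s < N"
  shows "confusable s (trajectory \<omega> (Suc N)) ys \<longleftrightarrow>
    is_walk V E ys \<and> length ys = Suc N \<and> ys ! 0 = X 0 \<omega> \<and>
    (\<forall>i \<le> N. l (ys ! i) = l (X i \<omega>)) \<and> ys ! Suc s \<noteq> X (Suc s) \<omega>"
proof -
  have traj: "length (trajectory \<omega> (Suc N)) = Suc N" "\<And>i. i \<le> N \<Longrightarrow> trajectory \<omega> (Suc N) ! i = X i \<omega>"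
    by (simp_all add: trajectory_def less_Suc_eq_le del: upt_Suc)
  then have colors: "map l ys = map l (trajectory \<omega> (Suc N)) \<longleftrightarrow>
      length ys = Suc N \<and> (\<forall>i \<le> N. l (ys ! i) = l (X i \<omega>))"
    by (auto simp: list_eq_iff_nth_eq less_Suc_eq_le)
  have "length ys = Suc N \<Longrightarrow> hd ys = ys ! 0" "hd (trajectory \<omega> (Suc N)) = X 0 \<omega>"
    using traj by (simp_all add: hd_conv_nth flip: length_greater_0_conv)
  with colors traj assms show ?thesis
    by (auto simp: confusable_def is_walk_iff_walk)
qed

end

theorem theorem2:
  fixes V :: "'v set" and E :: "('v \<times> 'v) set" and l :: "'v \<Rightarrow> 'c" and Phi :: "'c set"
    and M :: "'w measure" and P :: "'v \<Rightarrow> 'v \<Rightarrow> real" and X :: "nat \<Rightarrow> 'w \<Rightarrow> 'v"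
  assumes "weak_model V E l Phi"
    and "strongly_connected V E"
    and "trackable V E l Phi"
    and "markov_chain M V P X"
    and "\<forall>i\<in>V. \<forall>j\<in>V. P i j > 0 \<longleftrightarrow> (i, j) \<in> E"
  shows "AE \<omega> in M. \<forall>s. \<exists>N > s. \<forall>ys.
           is_walk V E ys \<and> length ys = Suc N \<and> ys ! 0 = X 0 \<omega> \<and>
           (\<forall>i \<le> N. l (ys ! i) = l (X i \<omega>))
           \<longrightarrow> ys ! Suc s = X (Suc s) \<omega>"
proof -
  interpret trackable_markov_chain V E l Phi M P X
    by unfold_locales (use assms in auto)
  show ?thesis
    unfolding AE_all_countable
  proof
    fix s
    from AE_eventually_not_confused[of s] show "AE \<omega> in M. \<exists>N > s. \<forall>ys.
        is_walk V E ys \<and> length ys = Suc N \<and> ys ! 0 = X 0 \<omega> \<and> (\<forall>i \<le> N. l (ys ! i) = l (X i \<omega>))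
        \<longrightarrow> ys ! Suc s = X (Suc s) \<omega>"
      by eventually_elim (metis confusable_trajectory_iff)
  qed
qed

end
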